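(* Let $a\in[-1,1)$ and $\psi_a=\mathds{1}_{[a,1]}$ on $[-1,1]$. Write $P_{\mathcal{A}_+}(\psi_a)=\sum_{n=0}^\infty c_nt^n$ with $c_n\ge0$, and let $S(a)=\{n\in\mathbb{N}:c_n>0\}$. Then $S(a)=\{0,1\}$ if and only if $-\frac1{\sqrt5}\le a\le0$. Moreover, for every $a\in[-1/\sqrt5,0]$, \[ P_{\mathcal{A}_+}(\psi_a)=\frac12(1-a)+\frac34(1-a^2)t. \]
   Context: $\mathbb{N}=\{0,1,2,\dots\}$. $\psi_a(t)=0$ for $t\in[-1,a)$ and $\psi_a(t)=1$ for $t\in[a,1]$. $\mathcal{A}_+=\{\sum_{n=0}^\infty a_nt^n : a_n\ge0,\ \text{the series converges in }L^2([-1,1])\}$ (real $L^2$ for Lebesgue measure, convergence of partial sums); it is a closed convex cone, $P_{\mathcal{A}_+}$ denotes the metric projection onto it (the unique nearest point), and every element of $\mathcal{A}_+$ has a unique representation $\sum_n c_nt^n$ with $c_n\ge0$. *)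

theory Defs
  imports "HOL-Analysis.Analysis"
begin

text \<open>Indicator function psi_a of [a,1] (only its values on [-1,1] matter).\<close>
definition psi :: "real \<Rightarrow> real \<Rightarrow> real" where
  "psi a t = (if a \<le> t then 1 else 0)"

definition L2 :: "(real \<Rightarrow> real) set" where
  "L2 = {f. f \<in> borel_measurable lborel \<and> set_integrable lborel {-1..1} (\<lambda>t. (f t)\<^sup>2)}"

definition L2dist2 :: "(real \<Rightarrow> real) \<Rightarrow> (real \<Rightarrow> real) \<Rightarrow> real" where
  "L2dist2 f g = (LINT t:{-1..1}|lborel. (f t - g t)\<^sup>2)"

definition psums :: "(nat \<Rightarrow> real) \<Rightarrow> nat \<Rightarrow> real \<Rightarrow> real" where
  "psums c N t = (\<Sum>n<N. c n * t ^ n)"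

definition series_converges_to :: "(nat \<Rightarrow> real) \<Rightarrow> (real \<Rightarrow> real) \<Rightarrow> bool" where
  "series_converges_to c f \<longleftrightarrow> f \<in> L2 \<and> (\<lambda>N. L2dist2 (psums c N) f) \<longlonglongrightarrow> 0"

definition Aplus :: "(real \<Rightarrow> real) set" where
  "Aplus = {f. \<exists>c. (\<forall>n. 0 \<le> c n) \<and> series_converges_to c f}"

text \<open>p is a nearest point of A to h (metric projection; unique up to a.e. equality).\<close>
definition is_proj :: "(real \<Rightarrow> real) set \<Rightarrow> (real \<Rightarrow> real) \<Rightarrow> (real \<Rightarrow> real) \<Rightarrow> bool" where
  "is_proj A h p \<longleftrightarrow> p \<in> A \<and> (\<forall>g\<in>A. L2dist2 h p \<le> L2dist2 h g)"

end

(*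
  The cone A+ is generated by the monomials t^n, so p = sum c_n t^n is the nearest point to h
  exactly when the residual h - p has non-positive inner product with every monomial, with
  equality wherever c_n > 0: perturbing p by s t^n is allowed for all s >= -c_n, and conversely
  these conditions give the variational inequality <h - p, p - g> >= 0 on the cone by summing
  against the coefficients of g.

  For h = psi_a and p = alpha + beta t the moments <psi_a - p, t^n> are explicit.  The equalities
  at n = 0, 1 force alpha = (1 - a)/2 and beta = 3/4 (1 - a^2); then the inequality at n = 2 is
  a <= 0 and the one at n = 3 is 5 a^2 <= 1, and these two already imply all the others.
  Finally, an element of A+ that equals a linear polynomial has no coefficients of degree >= 2,
  because pairing it with a suitable cubic orthogonal to 1 and t gives a sum of non-positive
  terms that vanishes.
*)

theory Submission
  imports Defs
begin

section \<open>Square-integrable functions on [-1, 1]\<close>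

definition mu :: "real measure" where
  "mu = restrict_space lborel {-1..1}"

lemma space_mu [simp]: "space mu = {-1..1}"
  unfolding mu_def by (simp add: space_restrict_space)

lemma finite_measure_mu: "finite_measure mu"
  unfolding mu_def by (rule finite_measureI) (simp add: emeasure_restrict_space space_restrict_space)

lemma borel_measurable_mu: "f \<in> borel_measurable lborel \<Longrightarrow> f \<in> borel_measurable mu"
  unfolding mu_def by (rule measurable_restrict_space1)

lemma integral_mu_eq_lborel:
  fixes f :: "real \<Rightarrow> real"
  shows "integral\<^sup>L mu f = (LINT t|lborel. f t * indicator {-1..1} t)"
  unfolding mu_def by (subst integral_restrict_space) (auto simp: mult.commute)

lemma AE_mu_iff: "(AE t in mu. P t) \<longleftrightarrow> (AE t in lborel. t \<in> {-1..1} \<longrightarrow> P t)"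
  unfolding mu_def by (rule AE_restrict_space_iff) simp

lemma L2_iff_mu: "f \<in> L2 \<longleftrightarrow> f \<in> borel_measurable lborel \<and> integrable mu (\<lambda>t. (f t)\<^sup>2)"
  unfolding L2_def set_integrable_def mu_def
  by (simp add: integrable_restrict_space)

lemma L2dist2_eq_integral_mu: "L2dist2 f g = integral\<^sup>L mu (\<lambda>t. (f t - g t)\<^sup>2)"
  unfolding L2dist2_def set_lebesgue_integral_def mu_def
  by (simp add: integral_restrict_space)

lemma L2_borel_measurable_mu: "f \<in> L2 \<Longrightarrow> f \<in> borel_measurable mu"
  by (simp add: L2_iff_mu borel_measurable_mu)

lemma L2_integrable_square: "f \<in> L2 \<Longrightarrow> integrable mu (\<lambda>t. (f t)\<^sup>2)"
  by (simp add: L2_iff_mu)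

lemma L2_bounded:
  assumes f: "f \<in> borel_measurable lborel" and B: "\<And>t. t \<in> {-1..1} \<Longrightarrow> \<bar>f t\<bar> \<le> B"
  shows "f \<in> L2"
  unfolding L2_iff_mu
proof
  have "norm ((f t)\<^sup>2) \<le> B\<^sup>2" if "t \<in> space mu" for t
    using power_mono[OF B abs_ge_zero, of t 2] that by simp
  then have "AE t in mu. norm ((f t)\<^sup>2) \<le> B\<^sup>2"
    by (rule AE_I2)
  moreover have "(\<lambda>t. (f t)\<^sup>2) \<in> borel_measurable mu"
    using borel_measurable_mu[OF f] by measurable
  ultimately show "integrable mu (\<lambda>t. (f t)\<^sup>2)"
    by (intro finite_measure.integrable_const_bound[OF finite_measure_mu])
qed (fact f)

lemma abs_mult_le_weighted_squares:
  fixes x y r :: real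
  assumes "r > 0"
  shows "\<bar>x * y\<bar> \<le> (r * x\<^sup>2 + y\<^sup>2 / r) / 2"
proof -
  have "0 \<le> (r * \<bar>x\<bar> - \<bar>y\<bar>)\<^sup>2 / r"
    using assms by simp
  also have "\<dots> = r * x\<^sup>2 + y\<^sup>2 / r - 2 * \<bar>x * y\<bar>"
    using assms by (simp add: power2_eq_square field_simps abs_mult)
  finally show ?thesis by simp
qed

lemma L2_integrable_mult:
  assumes "f \<in> L2" "g \<in> L2"
  shows "integrable mu (\<lambda>t. f t * g t)"
proof (rule Bochner_Integration.integrable_bound)
  show "integrable mu (\<lambda>t. (f t)\<^sup>2 + (g t)\<^sup>2)"
    using assms by (simp add: L2_integrable_square)
  show "(\<lambda>t. f t * g t) \<in> borel_measurable mu"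
    using assms[THEN L2_borel_measurable_mu] by measurable
  show "AE t in mu. norm (f t * g t) \<le> norm ((f t)\<^sup>2 + (g t)\<^sup>2)"
  proof (intro AE_I2)
    fix t
    have "\<bar>f t * g t\<bar> \<le> ((f t)\<^sup>2 + (g t)\<^sup>2) / 2"
      using abs_mult_le_weighted_squares[of 1] by simp
    then show "norm (f t * g t) \<le> norm ((f t)\<^sup>2 + (g t)\<^sup>2)"
      by simp
  qed
qed

lemma L2_const: "(\<lambda>_. c) \<in> L2"
  by (rule L2_bounded[where B = "\<bar>c\<bar>"]) auto

lemma L2_add:
  assumes f: "f \<in> L2" and g: "g \<in> L2"
  shows "(\<lambda>t. f t + g t) \<in> L2"
  unfolding L2_iff_mu
proof
  show "(\<lambda>t. f t + g t) \<in> borel_measurable lborel"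
    using f g by (simp add: L2_iff_mu borel_measurable_add)
  have "(\<lambda>t. (f t + g t)\<^sup>2) = (\<lambda>t. (f t)\<^sup>2 + 2 * (f t * g t) + (g t)\<^sup>2)"
    by (simp add: power2_eq_square algebra_simps)
  then show "integrable mu (\<lambda>t. (f t + g t)\<^sup>2)"
    using L2_integrable_square[OF f] L2_integrable_square[OF g] L2_integrable_mult[OF f g]
    by simp
qed

lemma L2_cmult: "f \<in> L2 \<Longrightarrow> (\<lambda>t. r * f t) \<in> L2"
  by (auto simp: L2_iff_mu power_mult_distrib)

lemma L2_diff: "f \<in> L2 \<Longrightarrow> g \<in> L2 \<Longrightarrow> (\<lambda>t. f t - g t) \<in> L2"
  using L2_add[OF _ L2_cmult, of f g "-1"] by simp

lemma L2_power: "(\<lambda>t. t ^ n) \<in> L2"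
  by (rule L2_bounded[where B = 1]) (auto simp: power_abs intro: power_le_one)

lemma L2_linear: "(\<lambda>t. c0 + c1 * t) \<in> L2"
  using L2_add[OF L2_const L2_cmult[OF L2_power[of 1]]] by simp

lemma L2_psums: "psums c N \<in> L2"
  by (induction N) (simp_all add: psums_def L2_const L2_add L2_cmult L2_power)

lemma L2_psi: "psi a \<in> L2"
proof (rule L2_bounded[where B = 1])
  have "psi a = indicator {a..}"
    by (auto simp: psi_def indicator_def fun_eq_iff)
  then show "psi a \<in> borel_measurable lborel"
    by (simp add: borel_measurable_indicator_iff)
qed (simp add: psi_def)

definition L2_inner :: "(real \<Rightarrow> real) \<Rightarrow> (real \<Rightarrow> real) \<Rightarrow> real" where
  "L2_inner u v = integral\<^sup>L mu (\<lambda>t. u t * v t)"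

lemma L2_inner_commute: "L2_inner u v = L2_inner v u"
  unfolding L2_inner_def by (simp add: mult.commute)

lemma L2_inner_cmult_right: "L2_inner u (\<lambda>t. r * v t) = r * L2_inner u v"
  unfolding L2_inner_def by (simp add: mult.left_commute)

lemma L2_inner_diff_right:
  "u \<in> L2 \<Longrightarrow> f \<in> L2 \<Longrightarrow> g \<in> L2 \<Longrightarrow> L2_inner u (\<lambda>t. f t - g t) = L2_inner u f - L2_inner u g"
  using L2_integrable_mult[of u f] L2_integrable_mult[of u g]
  by (simp add: L2_inner_def right_diff_distrib)

lemma L2_inner_psums:
  assumes "u \<in> L2"
  shows "L2_inner u (psums c N) = (\<Sum>n<N. c n * L2_inner u (\<lambda>t. t ^ n))"
proof -
  have "L2_inner u (psums c N) = integral\<^sup>L mu (\<lambda>t. \<Sum>n<N. c n * (u t * t ^ n))"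
    unfolding L2_inner_def psums_def by (simp add: sum_distrib_left algebra_simps)
  also have "\<dots> = (\<Sum>n<N. c n * L2_inner u (\<lambda>t. t ^ n))"
    using L2_integrable_mult[OF assms L2_power]
    by (subst Bochner_Integration.integral_sum) (auto simp: L2_inner_def)
  finally show ?thesis .
qed

lemma L2_inner_linear_right:
  assumes "u \<in> L2"
  shows "L2_inner u (\<lambda>t. c0 + c1 * t) = c0 * L2_inner u (\<lambda>_. 1) + c1 * L2_inner u (\<lambda>t. t)"
  using L2_integrable_mult[OF assms L2_const] L2_integrable_mult[OF assms L2_power[of 1]]
  by (simp add: L2_inner_def distrib_left mult.left_commute)

lemma L2_inner_cong_AE:
  assumes "u \<in> L2" "v \<in> L2" "w \<in> L2" and "AE t in mu. u t = v t"
  shows "L2_inner u w = L2_inner v w"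
  unfolding L2_inner_def
proof (rule integral_cong_AE)
  show "(\<lambda>t. u t * w t) \<in> borel_measurable mu" "(\<lambda>t. v t * w t) \<in> borel_measurable mu"
    using assms(1-3)[THEN L2_borel_measurable_mu] by measurable
  show "AE t in mu. u t * w t = v t * w t"
    using assms(4) by eventually_elim simp
qed

lemma L2dist2_nonneg: "0 \<le> L2dist2 f g"
  by (simp add: L2dist2_eq_integral_mu)

lemma L2dist2_self: "L2dist2 f f = 0"
  by (simp add: L2dist2_eq_integral_mu)

lemma L2dist2_expand:
  assumes f: "f \<in> L2" and g: "g \<in> L2" and q: "q \<in> L2"
  shows "L2dist2 f g = L2dist2 f q + 2 * L2_inner (\<lambda>t. f t - q t) (\<lambda>t. q t - g t) + L2dist2 q g"
proof -
  have fq: "(\<lambda>t. f t - q t) \<in> L2" and qg: "(\<lambda>t. q t - g t) \<in> L2"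
    using f g q by (auto intro: L2_diff)
  have "(\<lambda>t. (f t - g t)\<^sup>2) = (\<lambda>t. (f t - q t)\<^sup>2 + 2 * ((f t - q t) * (q t - g t)) + (q t - g t)\<^sup>2)"
    by (simp add: power2_eq_square algebra_simps)
  then show ?thesis
    using L2_integrable_square[OF fq] L2_integrable_square[OF qg] L2_integrable_mult[OF fq qg]
    by (simp add: L2dist2_eq_integral_mu L2_inner_def)
qed

lemma L2dist2_eq_0_imp_AE:
  assumes "f \<in> L2" "g \<in> L2" "L2dist2 f g = 0"
  shows "AE t in mu. f t = g t"
proof -
  have "AE t in mu. (f t - g t)\<^sup>2 = 0"
    using assms(3) L2_integrable_square[OF L2_diff[OF assms(1,2)]]
    by (simp add: L2dist2_eq_integral_mu integral_nonneg_eq_0_iff_AE)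
  then show ?thesis
    by eventually_elim simp
qed

lemma L2_inner_abs_le:
  assumes u: "u \<in> L2" and d: "d \<in> L2" and r: "r > 0"
  shows "\<bar>L2_inner u d\<bar> \<le> (r * L2dist2 u (\<lambda>_. 0) + L2dist2 d (\<lambda>_. 0) / r) / 2"
proof -
  have "\<bar>L2_inner u d\<bar> \<le> integral\<^sup>L mu (\<lambda>t. \<bar>u t * d t\<bar>)"
    unfolding L2_inner_def by (rule integral_abs_bound)
  also have "\<dots> \<le> integral\<^sup>L mu (\<lambda>t. (r * (u t)\<^sup>2 + (d t)\<^sup>2 / r) / 2)"
    using abs_mult_le_weighted_squares[OF r] L2_integrable_mult[OF u d]
      L2_integrable_square[OF u] L2_integrable_square[OF d]
    by (intro integral_mono) auto
  also have "\<dots> = (r * L2dist2 u (\<lambda>_. 0) + L2dist2 d (\<lambda>_. 0) / r) / 2"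
    using L2_integrable_square[OF u] L2_integrable_square[OF d]
    by (simp add: L2dist2_eq_integral_mu)
  finally show ?thesis .
qed

lemma L2_inner_tendsto:
  assumes u: "u \<in> L2" and fN: "\<And>N. fN N \<in> L2" and f: "f \<in> L2"
    and lim: "(\<lambda>N. L2dist2 (fN N) f) \<longlonglongrightarrow> 0"
  shows "(\<lambda>N. L2_inner u (fN N)) \<longlonglongrightarrow> L2_inner u f"
proof (rule LIMSEQ_I)
  fix e :: real
  assume e: "0 < e"
  define U where "U = L2dist2 u (\<lambda>_. 0)"
  define r where "r = e / (U + 1)"
  have U: "0 \<le> U" unfolding U_def by (rule L2dist2_nonneg)
  then have r: "0 < r" "r * U < e"
    using e by (simp_all add: r_def field_simps)
  obtain N0 where "\<forall>N\<ge>N0. norm (L2dist2 (fN N) f - 0) < r * e"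
    using LIMSEQ_D[OF lim, of "r * e"] r e by auto
  then have N0: "L2dist2 (fN N) f < r * e" if "N \<ge> N0" for N
    using that by (simp add: L2dist2_nonneg)
  have "norm (L2_inner u (fN N) - L2_inner u f) < e" if "N \<ge> N0" for N
  proof -
    have "\<bar>L2_inner u (fN N) - L2_inner u f\<bar> = \<bar>L2_inner u (\<lambda>t. fN N t - f t)\<bar>"
      using L2_inner_diff_right[OF u fN f] by simp
    also have "\<dots> \<le> (r * U + L2dist2 (fN N) f / r) / 2"
      using L2_inner_abs_le[OF u L2_diff[OF fN f] r(1)] by (simp add: U_def L2dist2_def)
    also have "\<dots> < e"
    proof -
      have "L2dist2 (fN N) f / r < e"
        using N0[OF that] r(1) by (simp add: pos_divide_less_eq mult.commute)
      with r(2) have "r * U + L2dist2 (fN N) f / r < 2 * e"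
        by linarith
      then show ?thesis
        by simp
    qed
    finally show ?thesis by simp
  qed
  then show "\<exists>N0. \<forall>N\<ge>N0. norm (L2_inner u (fN N) - L2_inner u f) < e"
    by blast
qed

section \<open>Power series in L2\<close>

lemma series_converges_to_L2: "series_converges_to c p \<Longrightarrow> p \<in> L2"
  by (simp add: series_converges_to_def)

lemma series_converges_to_inner_sums:
  assumes "series_converges_to c p" and "u \<in> L2"
  shows "(\<lambda>n. c n * L2_inner u (\<lambda>t. t ^ n)) sums L2_inner u p"
proof -
  have "(\<lambda>N. L2_inner u (psums c N)) \<longlonglongrightarrow> L2_inner u p"
    using assms(1) unfolding series_converges_to_def
    by (intro L2_inner_tendsto[OF assms(2) L2_psums]) auto
  then show ?thesis
    unfolding sums_def L2_inner_psums[OF assms(2)] .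
qed

lemma psums_finite_support:
  assumes "\<And>n. n \<ge> K \<Longrightarrow> c n = 0" and "N \<ge> K"
  shows "psums c N = psums c K"
  using assms(2)
proof (induction rule: dec_induct)
  case (step N)
  then show ?case
    using assms(1)[of N] by (simp add: psums_def)
qed simp

lemma psums_2: "psums c 2 = (\<lambda>t. c 0 + c 1 * t)"
  by (simp add: psums_def numeral_2_eq_2 fun_eq_iff)

lemma series_converges_to_finite_support:
  assumes "\<And>n. n \<ge> K \<Longrightarrow> c n = 0"
  shows "series_converges_to c (psums c K)"
  unfolding series_converges_to_def
proof
  have "L2dist2 (psums c N) (psums c K) = 0" if "N \<ge> K" for N
    using psums_finite_support[OF assms that] by (simp add: L2dist2_self)
  then have "\<forall>\<^sub>F N in sequentially. L2dist2 (psums c N) (psums c K) = 0"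
    unfolding eventually_sequentially by blast
  then show "(\<lambda>N. L2dist2 (psums c N) (psums c K)) \<longlonglongrightarrow> 0"
    by (rule tendsto_eventually)
qed (rule L2_psums)

lemma series_converges_to_finite_support_AE:
  assumes "\<And>n. n \<ge> K \<Longrightarrow> c n = 0" and "series_converges_to c p"
  shows "AE t in mu. psums c K t = p t"
proof (rule L2dist2_eq_0_imp_AE[OF L2_psums series_converges_to_L2[OF assms(2)]])
  have "L2dist2 (psums c N) p = L2dist2 (psums c K) p" if "N \<ge> K" for N
    using psums_finite_support[OF assms(1) that] by simp
  then have "\<forall>\<^sub>F N in sequentially. L2dist2 (psums c N) p = L2dist2 (psums c K) p"
    unfolding eventually_sequentially by blast
  then have "(\<lambda>N. L2dist2 (psums c N) p) \<longlonglongrightarrow> L2dist2 (psums c K) p"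
    by (rule tendsto_eventually)
  then show "L2dist2 (psums c K) p = 0"
    using assms(2) LIMSEQ_unique unfolding series_converges_to_def by blast
qed

lemma series_converges_to_add_monomial:
  assumes "series_converges_to c p"
  shows "series_converges_to (\<lambda>n. c n + (if n = k then s else 0)) (\<lambda>t. p t + s * t ^ k)"
  unfolding series_converges_to_def
proof
  show "(\<lambda>t. p t + s * t ^ k) \<in> L2"
    using series_converges_to_L2[OF assms] by (intro L2_add L2_cmult L2_power)
  have psums_eq: "psums (\<lambda>n. c n + (if n = k then s else 0)) N t = psums c N t + s * t ^ k"
    if "N > k" for N t
  proof -
    have "(c n + (if n = k then s else 0)) * t ^ n = c n * t ^ n + (if n = k then s * t ^ k else 0)"
      for n
      by (simp add: distrib_right)
    then show ?thesis
      using that by (simp add: psums_def sum.distrib)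
  qed
  have "L2dist2 (psums (\<lambda>n. c n + (if n = k then s else 0)) N) (\<lambda>t. p t + s * t ^ k)
      = L2dist2 (psums c N) p" if "N \<ge> Suc k" for N
    using that by (simp add: L2dist2_def psums_eq Suc_le_eq)
  then have "\<forall>\<^sub>F N in sequentially.
      L2dist2 (psums c N) p =
      L2dist2 (psums (\<lambda>n. c n + (if n = k then s else 0)) N) (\<lambda>t. p t + s * t ^ k)"
    unfolding eventually_sequentially by (intro exI[of _ "Suc k"]) simp
  moreover have "(\<lambda>N. L2dist2 (psums c N) p) \<longlonglongrightarrow> 0"
    using assms by (simp add: series_converges_to_def)
  ultimately show "(\<lambda>N. L2dist2 (psums (\<lambda>n. c n + (if n = k then s else 0)) N) (\<lambda>t. p t + s * t ^ k))
      \<longlonglongrightarrow> 0"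
    by (rule Lim_transform_eventually[rotated])
qed

section \<open>Metric projection onto the cone of nonnegative power series\<close>

definition power_moment :: "nat \<Rightarrow> real" where
  "power_moment k = (if even k then 2 / (real k + 1) else 0)"

lemma integral_power_mu: "integral\<^sup>L mu (\<lambda>t. t ^ k) = power_moment k"
proof -
  have "integral\<^sup>L mu (\<lambda>t. t ^ k) = (1 ^ Suc k - (-1) ^ Suc k) / Suc k"
    unfolding integral_mu_eq_lborel by (rule integral_power) simp
  then show ?thesis
    by (simp add: power_moment_def)
qed

lemma L2_inner_power_power: "L2_inner (\<lambda>t. t ^ m) (\<lambda>t. t ^ n) = power_moment (m + n)"
  unfolding L2_inner_def by (simp add: power_add[symmetric] integral_power_mu)

lemma power_moment_even_pos: "0 < power_moment (2 * k)"
  by (simp add: power_moment_def)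

lemma L2dist2_add_monomial:
  assumes h: "h \<in> L2" and p: "p \<in> L2"
  shows "L2dist2 h (\<lambda>t. p t + s * t ^ k)
    = L2dist2 h p - 2 * s * L2_inner (\<lambda>t. h t - p t) (\<lambda>t. t ^ k) + s\<^sup>2 * power_moment (2 * k)"
proof -
  have "L2dist2 h (\<lambda>t. p t + s * t ^ k) = L2dist2 h p
      + 2 * L2_inner (\<lambda>t. h t - p t) (\<lambda>t. p t - (p t + s * t ^ k)) + L2dist2 p (\<lambda>t. p t + s * t ^ k)"
    using h p by (intro L2dist2_expand L2_add L2_cmult L2_power)
  also have "L2_inner (\<lambda>t. h t - p t) (\<lambda>t. p t - (p t + s * t ^ k))
      = - s * L2_inner (\<lambda>t. h t - p t) (\<lambda>t. t ^ k)"
    using L2_inner_cmult_right[of _ "- s"] by simp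
  also have "L2dist2 p (\<lambda>t. p t + s * t ^ k) = s\<^sup>2 * power_moment (2 * k)"
    by (simp add: L2dist2_eq_integral_mu power_mult_distrib power_mult[symmetric] integral_power_mu
        mult.commute[of 2])
  finally show ?thesis
    by simp
qed

lemma quadratic_min_at_zero:
  fixes c d m :: real
  assumes c: "0 \<le> c" and m: "0 < m" and min: "\<And>s. 0 \<le> c + s \<Longrightarrow> 2 * s * d \<le> s\<^sup>2 * m"
  shows "d \<le> 0" and "0 < c \<Longrightarrow> d = 0"
proof -
  show d: "d \<le> 0"
  proof (rule ccontr)
    assume "\<not> d \<le> 0"
    then have "0 < d" and "0 < d / m"
      using m by simp_all
    with min[of "d / m"] c m have "d * d \<le> 0"
      by (simp add: power2_eq_square field_simps)
    with \<open>0 < d\<close> show False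
      by (metis mult_pos_pos not_le)
  qed
  show "d = 0" if "0 < c"
  proof (rule ccontr)
    assume "d \<noteq> 0"
    with d have "d < 0" by simp
    define s where "s = max (d / m) (- c)"
    have s: "s < 0"
      using \<open>d < 0\<close> \<open>0 < c\<close> m by (simp add: s_def divide_neg_pos)
    have "d / m \<le> s"
      by (simp add: s_def)
    then have "d \<le> s * m"
      using m by (simp add: pos_divide_le_eq)
    have "0 \<le> c + s"
      by (simp add: s_def)
    then have "2 * s * d \<le> s * (s * m)"
      using min[of s] by (simp add: power2_eq_square mult.assoc)
    then have "s * m \<le> 2 * d"
      using s by (simp add: mult_le_cancel_left)
    with \<open>d \<le> s * m\<close> \<open>d < 0\<close> show False
      by linarith
  qed
qed

lemma Aplus_L2: "g \<in> Aplus \<Longrightarrow> g \<in> L2"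
  by (auto simp: Aplus_def series_converges_to_def)

lemma is_proj_Aplus_optimality:
  assumes h: "h \<in> L2" and c: "\<And>n. 0 \<le> c n" and p: "series_converges_to c p"
    and proj: "is_proj Aplus h p"
  shows "L2_inner (\<lambda>t. h t - p t) (\<lambda>t. t ^ k) \<le> 0"
    and "0 < c k \<Longrightarrow> L2_inner (\<lambda>t. h t - p t) (\<lambda>t. t ^ k) = 0"
proof -
  have "2 * s * L2_inner (\<lambda>t. h t - p t) (\<lambda>t. t ^ k) \<le> s\<^sup>2 * power_moment (2 * k)"
    if s: "0 \<le> c k + s" for s
  proof -
    have "(\<lambda>t. p t + s * t ^ k) \<in> Aplus"
      unfolding Aplus_def using series_converges_to_add_monomial[OF p] c s
      by (intro CollectI exI[of _ "\<lambda>n. c n + (if n = k then s else 0)"]) auto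
    then have "L2dist2 h p \<le> L2dist2 h (\<lambda>t. p t + s * t ^ k)"
      using proj by (simp add: is_proj_def)
    then show ?thesis
      using L2dist2_add_monomial[OF h series_converges_to_L2[OF p]] by simp
  qed
  then show "L2_inner (\<lambda>t. h t - p t) (\<lambda>t. t ^ k) \<le> 0"
    and "0 < c k \<Longrightarrow> L2_inner (\<lambda>t. h t - p t) (\<lambda>t. t ^ k) = 0"
    using quadratic_min_at_zero[OF c power_moment_even_pos] by blast+
qed

lemma Aplus_variational_inequality:
  assumes h: "h \<in> L2" and c: "\<And>n. 0 \<le> c n" and p: "series_converges_to c p"
    and le: "\<And>k. L2_inner (\<lambda>t. h t - p t) (\<lambda>t. t ^ k) \<le> 0"
    and eq: "\<And>k. 0 < c k \<Longrightarrow> L2_inner (\<lambda>t. h t - p t) (\<lambda>t. t ^ k) = 0"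
    and g: "g \<in> Aplus"
  shows "0 \<le> L2_inner (\<lambda>t. h t - p t) (\<lambda>t. p t - g t)"
proof -
  let ?u = "\<lambda>t. h t - p t"
  have u: "?u \<in> L2"
    using h series_converges_to_L2[OF p] by (rule L2_diff)
  obtain d where d: "\<And>n. 0 \<le> d n" and dg: "series_converges_to d g"
    using g by (auto simp: Aplus_def)
  have "(\<lambda>n. d n * L2_inner ?u (\<lambda>t. t ^ n)) sums L2_inner ?u g"
    using dg u by (rule series_converges_to_inner_sums)
  then have "L2_inner ?u g \<le> 0"
    using sums_le[OF _ _ sums_zero] d le by (meson mult_nonneg_nonpos)
  moreover have "(\<lambda>n. c n * L2_inner ?u (\<lambda>t. t ^ n)) sums L2_inner ?u p"
    using p u by (rule series_converges_to_inner_sums)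
  then have "L2_inner ?u p = 0"
  proof -
    have "c n * L2_inner ?u (\<lambda>t. t ^ n) = 0" for n
      using c[of n] eq[of n] by (cases "c n = 0") auto
    with \<open>(\<lambda>n. c n * L2_inner ?u (\<lambda>t. t ^ n)) sums L2_inner ?u p\<close> show ?thesis
      by (simp add: sums_unique2[OF _ sums_zero])
  qed
  ultimately show ?thesis
    using L2_inner_diff_right[OF u series_converges_to_L2[OF p] Aplus_L2[OF g]] by simp
qed

lemma is_proj_if_variational_inequality:
  assumes h: "h \<in> L2" and p: "p \<in> Aplus"
    and vi: "\<And>g. g \<in> Aplus \<Longrightarrow> 0 \<le> L2_inner (\<lambda>t. h t - p t) (\<lambda>t. p t - g t)"
  shows "is_proj Aplus h p"
    and "is_proj Aplus h q \<Longrightarrow> AE t in mu. p t = q t"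
proof -
  have pyth: "L2dist2 h p + L2dist2 p g \<le> L2dist2 h g" if g: "g \<in> Aplus" for g
    using L2dist2_expand[OF h Aplus_L2[OF g] Aplus_L2[OF p]] vi[OF g] by simp
  show "is_proj Aplus h p"
    unfolding is_proj_def
  proof (intro conjI ballI p)
    fix g
    assume "g \<in> Aplus"
    then show "L2dist2 h p \<le> L2dist2 h g"
      using pyth L2dist2_nonneg[of p g] by fastforce
  qed
  show "AE t in mu. p t = q t" if q: "is_proj Aplus h q"
  proof (rule L2dist2_eq_0_imp_AE[OF Aplus_L2[OF p]])
    have "q \<in> Aplus" "L2dist2 h q \<le> L2dist2 h p"
      using q p by (auto simp: is_proj_def)
    then show "q \<in> L2" "L2dist2 p q = 0"
      using pyth[of q] L2dist2_nonneg[of p q] by (auto intro: Aplus_L2)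
  qed
qed

lemma power_moment_weight_nonpos:
  fixes n :: nat
  defines "w \<equiv> power_moment n + 3 * power_moment (n + 1) - 3 * power_moment (n + 2)
    - 5 * power_moment (n + 3)"
  shows "w \<le> 0" and "2 \<le> n \<Longrightarrow> w < 0"
proof -
  have "w = - 4 * real n / ((real n + 1) * (real n + 3))" if "even n"
    using that by (simp add: w_def power_moment_def field_simps)
  moreover have "w = (4 - 4 * real n) / ((real n + 2) * (real n + 4))" and "1 \<le> n" if "odd n"
    using that by (auto simp: w_def power_moment_def field_simps elim: oddE)
  ultimately have "w \<le> 0 \<and> (2 \<le> n \<longrightarrow> w < 0)"
    by (cases "even n") (auto simp: divide_nonpos_pos divide_neg_pos)
  then show "w \<le> 0" and "2 \<le> n \<Longrightarrow> w < 0"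
    by auto
qed

lemma series_converges_to_linear:
  assumes c: "\<And>n. 0 \<le> c n" and p: "series_converges_to c p"
    and lin: "AE t in mu. p t = c0 + c1 * t"
  shows "c 0 = c0" and "c 1 = c1" and "2 \<le> n \<Longrightarrow> c n = 0"
proof -
  have moments: "(\<lambda>n. c n * power_moment (m + n)) sums (c0 * power_moment m + c1 * power_moment (m + 1))"
    for m
  proof -
    have "L2_inner (\<lambda>t. t ^ m) p = L2_inner (\<lambda>t. t ^ m) (\<lambda>t. c0 + c1 * t)"
      using L2_inner_cong_AE[OF series_converges_to_L2[OF p] L2_linear L2_power lin]
      by (simp add: L2_inner_commute)
    also have "\<dots> = c0 * power_moment m + c1 * power_moment (m + 1)"
      using L2_inner_power_power[of m 0] L2_inner_power_power[of m 1]
      by (simp add: L2_inner_linear_right[OF L2_power])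
    finally show ?thesis
      using series_converges_to_inner_sums[OF p L2_power, of m] by (simp add: L2_inner_power_power)
  qed
  \<comment> \<open>The weights are the moments of \<open>(1 + t) (1 + 2 t - 5 t\<^sup>2)\<close>, which is orthogonal to \<open>1\<close> and \<open>t\<close>.\<close>
  define w where "w n = power_moment n + 3 * power_moment (n + 1) - 3 * power_moment (n + 2)
    - 5 * power_moment (n + 3)" for n
  have "(\<lambda>n. c n * power_moment (0 + n) + 3 * (c n * power_moment (1 + n))
      - 3 * (c n * power_moment (2 + n)) - 5 * (c n * power_moment (3 + n))) sums
      ((c0 * power_moment 0 + c1 * power_moment 1) + 3 * (c0 * power_moment 1 + c1 * power_moment 2)
      - 3 * (c0 * power_moment 2 + c1 * power_moment 3) - 5 * (c0 * power_moment 3 + c1 * power_moment 4))"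
    using moments[of 0] moments[of 1] moments[of 2] moments[of 3]
    by (intro sums_diff sums_add sums_mult) (simp_all add: eval_nat_numeral)
  moreover have "(\<lambda>n. c n * power_moment (0 + n) + 3 * (c n * power_moment (1 + n))
      - 3 * (c n * power_moment (2 + n)) - 5 * (c n * power_moment (3 + n))) = (\<lambda>n. c n * w n)"
    by (simp add: w_def algebra_simps)
  ultimately have "(\<lambda>n. c n * w n) sums 0"
    by (simp add: power_moment_def)
  then have sums_0: "(\<lambda>n. - (c n * w n)) sums 0"
    using sums_minus by force
  have "0 \<le> - (c n * w n)" for n
    using c[of n] power_moment_weight_nonpos(1)[of n] by (simp add: w_def mult_nonneg_nonpos)
  then have "\<forall>n. - (c n * w n) = 0"
    using suminf_eq_zero_iff[OF sums_summable[OF sums_0]] sums_unique[OF sums_0] by simp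
  then have "c n * w n = 0" for n
    by simp
  then show high: "c n = 0" if "2 \<le> n" for n
    using power_moment_weight_nonpos(2)[OF that] unfolding w_def by (metis less_irrefl mult_eq_0_iff)
  have "(\<lambda>n. c n * power_moment (m + n)) sums (\<Sum>n<2. c n * power_moment (m + n))" for m
    by (rule sums_finite) (use high in auto)
  then have "c0 * power_moment m + c1 * power_moment (m + 1) = (\<Sum>n<2. c n * power_moment (m + n))"
    for m
    using moments sums_unique2 by metis
  from this[of 0] this[of 1] show "c 0 = c0" and "c 1 = c1"
    by (simp_all add: power_moment_def numeral_2_eq_2)
qed

section \<open>Projection of the step function\<close>

definition psi_residual_moment :: "real \<Rightarrow> real \<Rightarrow> real \<Rightarrow> nat \<Rightarrow> real" where
  "psi_residual_moment a c0 c1 k =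
    (1 - a ^ Suc k) / Suc k - c0 * power_moment k - c1 * power_moment (Suc k)"

lemma L2_inner_power_psi:
  assumes "-1 \<le> a" "a \<le> 1"
  shows "L2_inner (\<lambda>t. t ^ k) (psi a) = (1 - a ^ Suc k) / Suc k"
proof -
  have "(\<lambda>t. t ^ k * psi a t * indicator {-1..1} t) = (\<lambda>t. t ^ k * indicator {a..1} t)"
    using assms by (auto simp: psi_def indicator_def fun_eq_iff)
  then have "L2_inner (\<lambda>t. t ^ k) (psi a) = (LINT t|lborel. t ^ k * indicator {a..1} t)"
    by (simp add: L2_inner_def integral_mu_eq_lborel)
  also have "\<dots> = (1 ^ Suc k - a ^ Suc k) / Suc k"
    using assms by (intro integral_power) simp
  finally show ?thesis
    by simp
qed

lemma L2_inner_psi_residual_power: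
  assumes "-1 \<le> a" "a \<le> 1"
  shows "L2_inner (\<lambda>t. psi a t - (c0 + c1 * t)) (\<lambda>t. t ^ k) = psi_residual_moment a c0 c1 k"
proof -
  have "L2_inner (\<lambda>t. psi a t - (c0 + c1 * t)) (\<lambda>t. t ^ k)
      = L2_inner (\<lambda>t. t ^ k) (psi a) - L2_inner (\<lambda>t. t ^ k) (\<lambda>t. c0 + c1 * t)"
    using L2_inner_diff_right[OF L2_power L2_psi L2_linear] by (simp add: L2_inner_commute)
  also have "\<dots> = psi_residual_moment a c0 c1 k"
    using L2_inner_power_psi[OF assms] L2_inner_power_power[of k 0] L2_inner_power_power[of k 1]
    by (simp add: L2_inner_linear_right[OF L2_power] psi_residual_moment_def)
  finally show ?thesis .
qed

lemma psi_residual_moment_optimal_01: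
  "psi_residual_moment a ((1 - a) / 2) (3 / 4 * (1 - a\<^sup>2)) 0 = 0"
  "psi_residual_moment a ((1 - a) / 2) (3 / 4 * (1 - a\<^sup>2)) 1 = 0"
  by (simp_all add: psi_residual_moment_def power_moment_def field_simps power2_eq_square)

lemma psi_residual_moment_even:
  assumes "even k"
  shows "psi_residual_moment a ((1 - a) / 2) c1 k = (a - a ^ Suc k) / Suc k"
proof -
  have "(1 - a) / 2 * power_moment k = (1 - a) / Suc k"
    using assms by (simp add: power_moment_def field_simps)
  then show ?thesis
    using assms by (simp add: psi_residual_moment_def power_moment_def diff_divide_distrib)
qed

lemma psi_residual_moment_3:
  "psi_residual_moment a c0 (3 / 4 * (1 - a\<^sup>2)) 3 = (1 - a\<^sup>2) * (5 * a\<^sup>2 - 1) / 20"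
  by (simp add: psi_residual_moment_def power_moment_def field_simps power2_eq_square power4_eq_xxxx)

lemma psi_residual_moment_optimal_nonpos:
  fixes a :: real
  assumes a: "a \<le> 0" "5 * a\<^sup>2 \<le> 1"
  shows "psi_residual_moment a ((1 - a) / 2) (3 / 4 * (1 - a\<^sup>2)) k \<le> 0"
proof (cases "even k")
  case True
  have "a\<^sup>2 \<le> 1"
    using a(2) by simp
  then have "\<bar>a\<bar> \<le> 1"
    by (simp add: abs_square_le_1)
  then have "\<bar>a\<bar> ^ k \<le> 1"
    by (simp add: power_le_one)
  then have "a ^ k \<le> 1"
    by (metis abs_ge_self order_trans power_abs)
  then have "a \<le> a ^ Suc k"
    using mult_left_mono_neg[OF _ a(1)] by fastforce
  then show ?thesis
    using True by (simp add: psi_residual_moment_even divide_nonpos_pos)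
next
  case False
  then obtain j where k: "k = 2 * j + 1"
    using oddE by blast
  consider "j = 0" | "j = 1" | "2 \<le> j"
    by linarith
  then show ?thesis
  proof cases
    case 1
    then show ?thesis
      using k psi_residual_moment_optimal_01 by simp
  next
    case 2
    have "0 \<le> 1 - a\<^sup>2"
      using a by simp
    then have "psi_residual_moment a ((1 - a) / 2) (3 / 4 * (1 - a\<^sup>2)) 3 \<le> 0"
      unfolding psi_residual_moment_3 using a(2) by (intro divide_nonpos_pos mult_nonneg_nonpos) simp_all
    with k 2 show ?thesis
      by simp
  next
    case 3
    have "psi_residual_moment a ((1 - a) / 2) (3 / 4 * (1 - a\<^sup>2)) k
        = (1 - a ^ (2 * j + 2)) / (2 * j + 2) - 3 / 4 * (1 - a\<^sup>2) * (2 / (2 * j + 3))"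
      by (simp add: psi_residual_moment_def power_moment_def k)
    moreover have "0 \<le> a ^ (2 * j + 2)"
      by (rule zero_le_even_power) simp
    then have "(1 - a ^ (2 * j + 2)) / (2 * j + 2) \<le> 1 / (2 * j + 2)"
      by (intro divide_right_mono) simp_all
    moreover have "3 / 4 * (4 / 5) * (2 / (2 * j + 3)) \<le> 3 / 4 * (1 - a\<^sup>2) * (2 / (2 * j + 3))"
      using a(2) by (intro mult_right_mono mult_left_mono) simp_all
    moreover have "1 / (2 * j + 2) \<le> 3 / 4 * (4 / 5) * (2 / (2 * j + 3))"
      using 3 by (simp add: field_simps)
    ultimately show ?thesis
      by linarith
  qed
qed

lemma neg_inv_sqrt5_le_iff:
  fixes a :: real
  assumes "a \<le> 0"
  shows "- 1 / sqrt 5 \<le> a \<longleftrightarrow> 5 * a\<^sup>2 \<le> 1"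
proof -
  have "- 1 / sqrt 5 \<le> a \<longleftrightarrow> \<bar>a\<bar> \<le> sqrt (1 / 5)"
    using assms by (auto simp: real_sqrt_divide)
  also have "\<dots> \<longleftrightarrow> a\<^sup>2 \<le> 1 / 5"
    using sqrt_ge_absD[of a "1 / 5"] real_le_rsqrt[of "\<bar>a\<bar>" "1 / 5"] by auto
  finally show ?thesis
    by (simp add: mult.commute)
qed

lemma psi_proj_linear:
  fixes a :: real
  assumes a: "- 1 / sqrt 5 \<le> a" "a \<le> 0"
  defines "p0 \<equiv> \<lambda>t. (1 - a) / 2 + 3 / 4 * (1 - a\<^sup>2) * t"
  shows "is_proj Aplus (psi a) p0"
    and "is_proj Aplus (psi a) q \<Longrightarrow> AE t in mu. p0 t = q t"
proof -
  have a5: "5 * a\<^sup>2 \<le> 1"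
    using a neg_inv_sqrt5_le_iff by blast
  then have "a\<^sup>2 \<le> 1"
    by simp
  then have "\<bar>a\<bar> \<le> 1"
    by (simp add: abs_square_le_1)
  then have a1: "-1 \<le> a" "a \<le> 1" and "a\<^sup>2 \<le> 1"
    by (auto simp: abs_square_le_1)
  define c where "c n = (if n = 0 then (1 - a) / 2 else if n = 1 then 3 / 4 * (1 - a\<^sup>2) else 0)"
    for n :: nat
  have c: "0 \<le> c n" for n
    using a1 \<open>a\<^sup>2 \<le> 1\<close> by (simp add: c_def)
  have p0: "series_converges_to c p0"
    using series_converges_to_finite_support[of 2 c] by (simp add: psums_2 c_def p0_def)
  then have "p0 \<in> Aplus"
    unfolding Aplus_def using c by blast
  moreover have "0 \<le> L2_inner (\<lambda>t. psi a t - p0 t) (\<lambda>t. p0 t - g t)" if "g \<in> Aplus" for g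
  proof (rule Aplus_variational_inequality[OF L2_psi c p0 _ _ that])
    have resid: "L2_inner (\<lambda>t. psi a t - p0 t) (\<lambda>t. t ^ k)
        = psi_residual_moment a ((1 - a) / 2) (3 / 4 * (1 - a\<^sup>2)) k" for k
      unfolding p0_def using a1 by (rule L2_inner_psi_residual_power)
    show "L2_inner (\<lambda>t. psi a t - p0 t) (\<lambda>t. t ^ k) \<le> 0" for k
      unfolding resid using a(2) a5 by (rule psi_residual_moment_optimal_nonpos)
    show "L2_inner (\<lambda>t. psi a t - p0 t) (\<lambda>t. t ^ k) = 0" if "0 < c k" for k
    proof -
      have "k = 0 \<or> k = 1"
        using that by (auto simp: c_def split: if_splits)
      then show ?thesis
        unfolding resid using psi_residual_moment_optimal_01 by auto
    qed
  qed
  ultimately show "is_proj Aplus (psi a) p0"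
    and "is_proj Aplus (psi a) q \<Longrightarrow> AE t in mu. p0 t = q t"
    using is_proj_if_variational_inequality[OF L2_psi] by blast+
qed

lemma psi_proj_support_eq_01:
  fixes a :: real
  assumes a: "- 1 / sqrt 5 \<le> a" "a \<le> 0"
    and c: "\<And>n. 0 \<le> c n" and p: "series_converges_to c p" and proj: "is_proj Aplus (psi a) p"
  shows "{n. 0 < c n} = {0, 1}"
proof -
  have "AE t in mu. p t = (1 - a) / 2 + 3 / 4 * (1 - a\<^sup>2) * t"
    using psi_proj_linear(2)[OF a proj] by eventually_elim simp
  note coeffs = series_converges_to_linear[OF c p this]
  have "5 * a\<^sup>2 \<le> 1"
    using a neg_inv_sqrt5_le_iff by blast
  then have "0 < c 0" "0 < c 1"
    using a(2) coeffs(1,2) by auto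
  moreover have "n \<in> {0, 1}" if "0 < c n" for n
    using coeffs(3)[of n] that by (cases "2 \<le> n") auto
  ultimately show ?thesis
    by auto
qed

lemma psi_proj_support_01_imp_bounds:
  fixes a :: real
  assumes a: "-1 \<le> a" "a < 1"
    and c: "\<And>n. 0 \<le> c n" and p: "series_converges_to c p" and proj: "is_proj Aplus (psi a) p"
    and support: "{n. 0 < c n} = {0, 1}"
  shows "- 1 / sqrt 5 \<le> a \<and> a \<le> 0"
proof -
  have high: "c n = 0" if "2 \<le> n" for n
  proof -
    have "n \<notin> {n. 0 < c n}"
      using support that by auto
    then show ?thesis
      using c[of n] by simp
  qed
  have pos: "0 < c 0" "0 < c 1"
    using support by auto
  have "AE t in mu. c 0 + c 1 * t = p t"
    using series_converges_to_finite_support_AE[of 2 c p] high p by (simp add: psums_2)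
  then have residual_AE: "AE t in mu. psi a t - p t = psi a t - (c 0 + c 1 * t)"
    by eventually_elim simp
  have "L2_inner (\<lambda>t. psi a t - p t) (\<lambda>t. t ^ k) = psi_residual_moment a (c 0) (c 1) k" for k
  proof -
    have "L2_inner (\<lambda>t. psi a t - p t) (\<lambda>t. t ^ k)
        = L2_inner (\<lambda>t. psi a t - (c 0 + c 1 * t)) (\<lambda>t. t ^ k)"
      by (rule L2_inner_cong_AE[OF L2_diff[OF L2_psi series_converges_to_L2[OF p]]
          L2_diff[OF L2_psi L2_linear] L2_power residual_AE])
    also have "\<dots> = psi_residual_moment a (c 0) (c 1) k"
      using a by (intro L2_inner_psi_residual_power) simp_all
    finally show ?thesis .
  qed
  from this have le: "psi_residual_moment a (c 0) (c 1) k \<le> 0"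
    and eq: "0 < c k \<Longrightarrow> psi_residual_moment a (c 0) (c 1) k = 0" for k
    using is_proj_Aplus_optimality[OF L2_psi c p proj] by metis+
  have c0: "c 0 = (1 - a) / 2"
    using eq[OF pos(1)] by (simp add: psi_residual_moment_def power_moment_def)
  have c1: "c 1 = 3 / 4 * (1 - a\<^sup>2)"
    using eq[OF pos(2)] by (simp add: psi_residual_moment_def power_moment_def power2_eq_square)
  have "0 < 1 - a\<^sup>2"
    using pos(2) c1 by simp
  have "a * (1 - a\<^sup>2) \<le> 0"
    using le[of 2] c0 psi_residual_moment_even[of 2 a "c 1"]
    by (simp add: power2_eq_square power3_eq_cube algebra_simps)
  then have "a \<le> 0"
    using \<open>0 < 1 - a\<^sup>2\<close> by (simp add: mult_le_0_iff)
  moreover have "(1 - a\<^sup>2) * (5 * a\<^sup>2 - 1) / 20 \<le> 0"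
    using le[of 3] psi_residual_moment_3[of a "c 0", folded c1] by linarith
  then have "5 * a\<^sup>2 \<le> 1"
    using \<open>0 < 1 - a\<^sup>2\<close> by (simp add: mult_le_0_iff)
  ultimately show ?thesis
    using neg_inv_sqrt5_le_iff by blast
qed

theorem proposition1p10:
  fixes a :: real
  assumes "-1 \<le> a" and "a < 1"
  shows "(\<forall>c p. (\<forall>n. 0 \<le> c n) \<and> series_converges_to c p \<and> is_proj Aplus (psi a) p \<longrightarrow>
            ({n. c n > 0} = {0, 1} \<longleftrightarrow> - 1 / sqrt 5 \<le> a \<and> a \<le> 0))
       \<and> (- 1 / sqrt 5 \<le> a \<and> a \<le> 0 \<longrightarrow>
            is_proj Aplus (psi a) (\<lambda>t. (1 - a) / 2 + 3 / 4 * (1 - a\<^sup>2) * t) \<and>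
            (\<forall>p. is_proj Aplus (psi a) p \<longrightarrow>
               (AE t in lborel. t \<in> {-1..1} \<longrightarrow> p t = (1 - a) / 2 + 3 / 4 * (1 - a\<^sup>2) * t)))"
proof (intro conjI allI impI)
  fix c p
  assume "(\<forall>n. 0 \<le> c n) \<and> series_converges_to c p \<and> is_proj Aplus (psi a) p"
  then have c: "\<And>n. 0 \<le> c n" and p: "series_converges_to c p" and proj: "is_proj Aplus (psi a) p"
    by auto
  show "{n. c n > 0} = {0, 1} \<longleftrightarrow> - 1 / sqrt 5 \<le> a \<and> a \<le> 0"
  proof
    assume "{n. c n > 0} = {0, 1}"
    then show "- 1 / sqrt 5 \<le> a \<and> a \<le> 0"
      by (rule psi_proj_support_01_imp_bounds[OF assms c p proj])
  next
    assume "- 1 / sqrt 5 \<le> a \<and> a \<le> 0"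
    then show "{n. c n > 0} = {0, 1}"
      using psi_proj_support_eq_01[OF _ _ c p proj] by blast
  qed
next
  assume "- 1 / sqrt 5 \<le> a \<and> a \<le> 0"
  then have a: "- 1 / sqrt 5 \<le> a" "a \<le> 0"
    by auto
  then show "is_proj Aplus (psi a) (\<lambda>t. (1 - a) / 2 + 3 / 4 * (1 - a\<^sup>2) * t)"
    by (rule psi_proj_linear(1))
  fix p
  assume "is_proj Aplus (psi a) p"
  with a have "AE t in mu. (1 - a) / 2 + 3 / 4 * (1 - a\<^sup>2) * t = p t"
    by (rule psi_proj_linear(2))
  then show "AE t in lborel. t \<in> {-1..1} \<longrightarrow> p t = (1 - a) / 2 + 3 / 4 * (1 - a\<^sup>2) * t"
    unfolding AE_mu_iff by eventually_elim auto
qed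

end
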